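(* Let $\operatorname{MED}_2(f)$ be the number of numerical semigroups with maximal embedding dimension, Frobenius number $f$, and depth $2$. There are constants $D_0, D_1, D_2, D_3$ such that $\operatorname{MED}_2(f) \sim D_i \cdot 2^{f/4}$ as $f \to \infty$ with $f \equiv i \pmod 4$.
   Context: A numerical semigroup is a subset $\Lambda \subseteq \mathbb{N}_0$ containing $0$, closed under addition, with finite complement; its multiplicity $m$ is $\min(\Lambda\setminus\{0\})$, its conductor $c$ is the least integer with $c + \mathbb{N}_0 \subseteq \Lambda$, its Frobenius number is $c - 1$, and its depth is $\lceil c/m \rceil$. $\Lambda$ has maximal embedding dimension if its minimal generating set has exactly $m$ elements (equivalently, the Apéry set consisting of $m$ and the least element of $\Lambda$ in each nonzero residue class mod $m$ minimally generates $\Lambda$). *)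

theory Defs
  imports Complex_Main "HOL-Library.Landau_Symbols"
begin

definition numerical_semigroup :: "nat set \<Rightarrow> bool" where
  "numerical_semigroup S \<longleftrightarrow>
     0 \<in> S \<and> (\<forall>x\<in>S. \<forall>y\<in>S. x + y \<in> S) \<and> finite (UNIV - S)"

definition multiplicity_ns :: "nat set \<Rightarrow> nat" where
  "multiplicity_ns S = (LEAST x. x \<in> S \<and> x \<noteq> 0)"

definition conductor :: "nat set \<Rightarrow> nat" where
  "conductor S = (LEAST c. \<forall>n\<ge>c. n \<in> S)"

definition frobenius :: "nat set \<Rightarrow> int" where
  "frobenius S = int (conductor S) - 1"

definition depth :: "nat set \<Rightarrow> int" where
  "depth S = \<lceil>real (conductor S) / real (multiplicity_ns S)\<rceil>"

definition minimal_generators :: "nat set \<Rightarrow> nat set" where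
  "minimal_generators S =
     {x \<in> S. x \<noteq> 0 \<and> \<not> (\<exists>a\<in>S. \<exists>b\<in>S. a \<noteq> 0 \<and> b \<noteq> 0 \<and> x = a + b)}"

definition max_embedding_dim :: "nat set \<Rightarrow> bool" where
  "max_embedding_dim S \<longleftrightarrow> card (minimal_generators S) = multiplicity_ns S"

definition MED2 :: "nat \<Rightarrow> nat" where
  "MED2 f = card {S. numerical_semigroup S \<and> max_embedding_dim S \<and>
                     frobenius S = int f \<and> depth S = 2}"

end

(* Write the Frobenius number of a numerical semigroup S of multiplicity m as f = m + k. Depth two
   means k < m, and then S = {0} \<union> (m + C) with C = {0} \<union> T \<union> {k<..} and T \<subseteq> {1..<k}. Any such
   set is a numerical semigroup, and it has maximal embedding dimension exactly when C is closed under
   addition below m, that is, when C is itself a numerical semigroup with Frobenius number k. Hence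
   MED2 f = N 1 + ... + N ((f - 1) div 2), where N F counts numerical semigroups with Frobenius number F.

   A semigroup with Frobenius number F = 2 m + d and multiplicity m is determined by a set L \<subseteq> [0, d]
   (its elements up to F - m, shifted by m) together with an arbitrary part of the window (F - m, F)
   that contains the sums forced into it. This gives N F = 2^(F - F div 2 - 1) + \<Sum>m c(F, m) with
   c(F, m) \<le> 2^(m-1) w(F - 2 m), and equality when F - 2 m < m, where w d sums 2^-|(L + L) \<inter> [0, d)| over
   the admissible L. Splitting L at d/2 shows w(2 j + p) \<le> (2/3) (35/18)^j, so the normalised terms are
   dominated by a geometric series and N(2 n + p) / 2^n converges to a positive limit for p = 0, 1.
   Summing these limits over the residue of f modulo 4 gives the theorem. *)

theory Submission
  imports Defs
begin

section \<open>Sumsets and shifted numerical semigroups\<close>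

definition shifted :: "nat \<Rightarrow> nat set \<Rightarrow> nat set" where
  "shifted m C = insert 0 ((+) m ` C)"

definition sumset :: "nat set \<Rightarrow> nat set" where
  "sumset A = {a + b | a b. a \<in> A \<and> b \<in> A}"

lemma mem_shifted: "x \<in> shifted m C \<longleftrightarrow> x = 0 \<or> (m \<le> x \<and> x - m \<in> C)"
  unfolding shifted_def by (auto simp: image_iff intro!: bexI[of _ "x - m"])

lemma self_subset_sumset: "0 \<in> A \<Longrightarrow> A \<subseteq> sumset A"
  unfolding sumset_def by force

lemma finite_sumset: "finite A \<Longrightarrow> finite (sumset A)"
proof -
  assume "finite A"
  moreover have "sumset A = (\<lambda>(a, b). a + b) ` (A \<times> A)" unfolding sumset_def by force
  ultimately show ?thesis by simp
qed

lemma sumset_mono: "A \<subseteq> B \<Longrightarrow> sumset A \<subseteq> sumset B"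
  unfolding sumset_def by blast

lemma multiplicity_ns_mem:
  assumes "numerical_semigroup S"
  shows "multiplicity_ns S \<in> S" "multiplicity_ns S \<noteq> 0"
proof -
  have "\<exists>x. x \<in> S \<and> x \<noteq> 0"
  proof (rule ccontr)
    assume "\<nexists>x. x \<in> S \<and> x \<noteq> 0"
    then have "UNIV - {0::nat} \<subseteq> UNIV - S" by auto
    then have "finite (UNIV - {0::nat})"
      using assms finite_subset unfolding numerical_semigroup_def by blast
    then show False by simp
  qed
  then have "(LEAST x. x \<in> S \<and> x \<noteq> 0) \<in> S \<and> (LEAST x. x \<in> S \<and> x \<noteq> 0) \<noteq> 0"
    by (rule LeastI_ex)
  then show "multiplicity_ns S \<in> S" "multiplicity_ns S \<noteq> 0" unfolding multiplicity_ns_def by auto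
qed

lemma multiplicity_ns_le: "x \<in> S \<Longrightarrow> x \<noteq> 0 \<Longrightarrow> multiplicity_ns S \<le> x"
  unfolding multiplicity_ns_def by (simp add: Least_le)

lemma conductor_le_mem:
  assumes "numerical_semigroup S" and "conductor S \<le> n"
  shows "n \<in> S"
proof -
  have "finite (UNIV - S)" using assms(1) unfolding numerical_semigroup_def by blast
  then obtain b where b: "\<forall>n\<in>UNIV - S. n < b" using finite_nat_set_iff_bounded by blast
  have "\<forall>n\<ge>b. n \<in> S"
  proof (intro allI impI)
    fix n assume "b \<le> n"
    show "n \<in> S"
    proof (rule ccontr)
      assume "n \<notin> S"
      then have "n < b" using b by blast
      then show False using \<open>b \<le> n\<close> by simp
    qed
  qed
  then have "\<forall>n\<ge>conductor S. n \<in> S" unfolding conductor_def by (rule LeastI)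
  then show ?thesis using assms(2) by blast
qed

lemma conductor_pred_not_mem:
  assumes "numerical_semigroup S" and "0 < conductor S"
  shows "conductor S - 1 \<notin> S"
proof
  assume "conductor S - 1 \<in> S"
  moreover have "n = conductor S - 1 \<or> conductor S \<le> n" if "conductor S - 1 \<le> n" for n
    using that by linarith
  ultimately have "\<forall>n\<ge>conductor S - 1. n \<in> S" using conductor_le_mem[OF assms(1)] by blast
  then have "conductor S \<le> conductor S - 1" unfolding conductor_def by (rule Least_le)
  then show False using assms(2) by linarith
qed

context
  fixes m k :: nat and C :: "nat set"
  assumes zero_in: "0 \<in> C" and gap: "k \<notin> C" and above: "{k<..} \<subseteq> C" and k_less: "k < m"
begin

lemma shifted_nonzero_ge: "x \<in> shifted m C \<Longrightarrow> x \<noteq> 0 \<Longrightarrow> m \<le> x"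
  by (simp add: mem_shifted)

lemma shifted_above: "m + k < x \<Longrightarrow> x \<in> shifted m C"
  using above by (auto simp: mem_shifted)

lemma numerical_semigroup_shifted: "numerical_semigroup (shifted m C)"
  unfolding numerical_semigroup_def
proof (intro conjI ballI)
  fix x y assume x: "x \<in> shifted m C" and y: "y \<in> shifted m C"
  show "x + y \<in> shifted m C"
  proof (cases "x = 0 \<or> y = 0")
    case False
    then have "m \<le> x" "m \<le> y" using x y shifted_nonzero_ge by auto
    then show ?thesis using k_less by (intro shifted_above) linarith
  qed (use x y in auto)
next
  have "UNIV - shifted m C \<subseteq> {..m + k}" using shifted_above by (auto simp: not_le[symmetric])
  then show "finite (UNIV - shifted m C)" using finite_subset by blast
qed (simp add: mem_shifted)

lemma multiplicity_shifted: "multiplicity_ns (shifted m C) = m"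
  unfolding multiplicity_ns_def
  using zero_in k_less shifted_nonzero_ge by (intro Least_equality) (auto simp: mem_shifted)

lemma conductor_shifted: "conductor (shifted m C) = m + k + 1"
  unfolding conductor_def
proof (rule Least_equality)
  show "\<forall>n\<ge>m + k + 1. n \<in> shifted m C" using shifted_above by auto
next
  fix c assume "\<forall>n\<ge>c. n \<in> shifted m C"
  moreover have "m + k \<notin> shifted m C" using gap k_less by (simp add: mem_shifted)
  ultimately show "m + k + 1 \<le> c" by (metis not_less_eq_eq Suc_eq_plus1)
qed

lemma frobenius_shifted: "frobenius (shifted m C) = int (m + k)"
  by (simp add: frobenius_def conductor_shifted)

lemma depth_shifted: "depth (shifted m C) = 2"
proof -
  have "1 < real (m + k + 1) / real m" "real (m + k + 1) / real m \<le> 2"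
    using k_less by (simp_all add: less_divide_eq divide_le_eq)
  then show ?thesis
    unfolding depth_def conductor_shifted multiplicity_shifted by (simp add: ceiling_eq_iff)
qed

lemma shifted_decomposable_iff:
  assumes "s \<in> C"
  shows "(\<exists>a\<in>shifted m C. \<exists>b\<in>shifted m C. a \<noteq> 0 \<and> b \<noteq> 0 \<and> m + s = a + b) \<longleftrightarrow>
         m \<le> s \<and> s - m \<in> sumset C"
proof
  assume "\<exists>a\<in>shifted m C. \<exists>b\<in>shifted m C. a \<noteq> 0 \<and> b \<noteq> 0 \<and> m + s = a + b"
  then obtain a b where "a \<in> shifted m C" "b \<in> shifted m C" "a \<noteq> 0" "b \<noteq> 0" "m + s = a + b"
    by blast
  then have "m \<le> a" "m \<le> b" "a - m \<in> C" "b - m \<in> C" by (auto simp: mem_shifted)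
  moreover from this have "m \<le> s" "s - m = (a - m) + (b - m)" using \<open>m + s = a + b\<close> by linarith+
  ultimately show "m \<le> s \<and> s - m \<in> sumset C" unfolding sumset_def by blast
next
  assume "m \<le> s \<and> s - m \<in> sumset C"
  then obtain a b where "a \<in> C" "b \<in> C" "s = m + a + b" unfolding sumset_def by force
  then show "\<exists>a\<in>shifted m C. \<exists>b\<in>shifted m C. a \<noteq> 0 \<and> b \<noteq> 0 \<and> m + s = a + b"
    using k_less by (intro bexI[of _ "m + a"] bexI[of _ "m + b"]) (auto simp: mem_shifted)
qed

lemma mem_minimal_generators_shifted:
  "x \<in> minimal_generators (shifted m C) \<longleftrightarrow> (\<exists>s\<in>C. x = m + s \<and> \<not> (m \<le> s \<and> s - m \<in> sumset C))"
proof
  assume x: "x \<in> minimal_generators (shifted m C)"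
  then have "x \<in> shifted m C" "x \<noteq> 0" unfolding minimal_generators_def by auto
  then obtain s where s: "s \<in> C" "x = m + s" by (auto simp: mem_shifted intro: that[of "x - m"])
  moreover have "\<not> (\<exists>a\<in>shifted m C. \<exists>b\<in>shifted m C. a \<noteq> 0 \<and> b \<noteq> 0 \<and> m + s = a + b)"
    using x s(2) unfolding minimal_generators_def by blast
  ultimately show "\<exists>s\<in>C. x = m + s \<and> \<not> (m \<le> s \<and> s - m \<in> sumset C)"
    using shifted_decomposable_iff[OF s(1)] by blast
next
  assume "\<exists>s\<in>C. x = m + s \<and> \<not> (m \<le> s \<and> s - m \<in> sumset C)"
  then obtain s where "s \<in> C" "x = m + s" "\<not> (m \<le> s \<and> s - m \<in> sumset C)" by blast
  then show "x \<in> minimal_generators (shifted m C)"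
    unfolding minimal_generators_def using shifted_decomposable_iff[of s] k_less
    by (auto simp: mem_shifted)
qed

lemma minimal_generators_shifted:
  "minimal_generators (shifted m C) =
     (+) m ` {r \<in> C. r < m} \<union> (+) (2 * m) ` {r. r < m \<and> r \<notin> sumset C}"
proof -
  have "minimal_generators (shifted m C) = {m + s | s. s \<in> C \<and> \<not> (m \<le> s \<and> s - m \<in> sumset C)}"
    using mem_minimal_generators_shifted by blast
  also have "\<dots> = (+) m ` {r \<in> C. r < m} \<union> (+) (2 * m) ` {r. r < m \<and> r \<notin> sumset C}"
  proof (intro equalityI subsetI)
    fix x assume "x \<in> {m + s | s. s \<in> C \<and> \<not> (m \<le> s \<and> s - m \<in> sumset C)}"
    then obtain s where s: "x = m + s" "s \<in> C" "\<not> (m \<le> s \<and> s - m \<in> sumset C)" by blast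
    show "x \<in> (+) m ` {r \<in> C. r < m} \<union> (+) (2 * m) ` {r. r < m \<and> r \<notin> sumset C}"
    proof (cases "s < m")
      case False
      moreover have "s - m < m"
      proof (rule ccontr)
        assume "\<not> s - m < m"
        then have "s - m \<in> {k<..}" using k_less by simp
        then have "s - m \<in> sumset C" using above self_subset_sumset[OF zero_in] by blast
        then show False using s(3) False by simp
      qed
      ultimately show ?thesis using s by (auto intro!: image_eqI[of _ _ "s - m"])
    qed (use s in auto)
  next
    fix x assume "x \<in> (+) m ` {r \<in> C. r < m} \<union> (+) (2 * m) ` {r. r < m \<and> r \<notin> sumset C}"
    then show "x \<in> {m + s | s. s \<in> C \<and> \<not> (m \<le> s \<and> s - m \<in> sumset C)}"
    proof (elim UnE imageE)
      fix r assume "r \<in> {r. r < m \<and> r \<notin> sumset C}" "x = 2 * m + r"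
      moreover have "m + r \<in> C" using above k_less by auto
      ultimately show ?thesis by (intro CollectI exI[of _ "m + r"]) auto
    qed auto
  qed
  finally show ?thesis .
qed

lemma max_embedding_dim_shifted:
  "max_embedding_dim (shifted m C) \<longleftrightarrow> (\<forall>r<m. r \<in> sumset C \<longrightarrow> r \<in> C)"
proof -
  define A where "A = {r \<in> C. r < m}"
  define B where "B = {r. r < m \<and> r \<notin> sumset C}"
  have disj: "A \<inter> B = {}" unfolding A_def B_def using self_subset_sumset[OF zero_in] by auto
  have sub: "A \<union> B \<subseteq> {..<m}" unfolding A_def B_def by auto
  then have fin: "finite A" "finite B" by (auto intro: finite_subset)
  have "(+) m ` A \<inter> (+) (2 * m) ` B = {}" unfolding A_def B_def by auto
  then have "card (minimal_generators (shifted m C)) = card (A \<union> B)"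
    unfolding minimal_generators_shifted A_def[symmetric] B_def[symmetric]
    using fin disj by (simp add: card_Un_disjoint card_image)
  then have "max_embedding_dim (shifted m C) \<longleftrightarrow> card (A \<union> B) = card {..<m}"
    unfolding max_embedding_dim_def multiplicity_shifted by simp
  also have "\<dots> \<longleftrightarrow> A \<union> B = {..<m}"
    using sub by (metis card_subset_eq finite_lessThan)
  also have "\<dots> \<longleftrightarrow> (\<forall>r<m. r \<in> sumset C \<longrightarrow> r \<in> C)"
    unfolding A_def B_def by auto
  finally show ?thesis .
qed

end

section \<open>Depth-two semigroups of maximal embedding dimension\<close>

text \<open>\<open>ns_below F T\<close> says that \<open>{0} \<union> T \<union> {F<..}\<close> is a numerical semigroup with Frobenius
  number \<open>F\<close>, so \<open>ns_count F\<close> is the number of numerical semigroups with Frobenius number \<open>F\<close>.\<close>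
definition ns_below :: "nat \<Rightarrow> nat set \<Rightarrow> bool" where
  "ns_below F T \<longleftrightarrow> T \<subseteq> {1..<F} \<and> (\<forall>a\<in>T. \<forall>b\<in>T. a + b \<noteq> F \<and> (a + b < F \<longrightarrow> a + b \<in> T))"

definition ns_count :: "nat \<Rightarrow> nat" where
  "ns_count F = card {T. ns_below F T}"

definition complete_above :: "nat \<Rightarrow> nat set \<Rightarrow> nat set" where
  "complete_above k T = insert 0 (T \<union> {k<..})"

lemma mem_complete_above: "x \<in> complete_above k T \<longleftrightarrow> x = 0 \<or> x \<in> T \<or> k < x"
  unfolding complete_above_def by auto

lemma sumset_closed_complete_above_iff:
  assumes T: "T \<subseteq> {1..<k}" and k_less: "k < m"
  shows "(\<forall>r<m. r \<in> sumset (complete_above k T) \<longrightarrow> r \<in> complete_above k T) \<longleftrightarrow> ns_below k T"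
proof
  assume closed: "\<forall>r<m. r \<in> sumset (complete_above k T) \<longrightarrow> r \<in> complete_above k T"
  have "a + b \<noteq> k \<and> (a + b < k \<longrightarrow> a + b \<in> T)" if "a \<in> T" "b \<in> T" for a b
  proof (cases "a + b < m")
    case True
    then have "a + b \<in> complete_above k T"
      using closed that unfolding sumset_def by (auto simp: mem_complete_above)
    then show ?thesis using that T by (auto simp: mem_complete_above)
  qed (use k_less in auto)
  then show "ns_below k T" unfolding ns_below_def using T by blast
next
  assume ns: "ns_below k T"
  have "a + b \<in> complete_above k T"
    if "a \<in> complete_above k T" "b \<in> complete_above k T" for a b
  proof (cases "a \<in> T \<and> b \<in> T")
    case True
    then have "a + b \<noteq> k" "a + b < k \<longrightarrow> a + b \<in> T" using ns unfolding ns_below_def by auto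
    then show ?thesis by (auto simp: mem_complete_above)
  qed (use that in \<open>auto simp: mem_complete_above\<close>)
  then show "\<forall>r<m. r \<in> sumset (complete_above k T) \<longrightarrow> r \<in> complete_above k T"
    unfolding sumset_def by auto
qed

lemma complete_above_basic:
  "0 \<in> complete_above k T" "{k<..} \<subseteq> complete_above k T"
  "0 < k \<Longrightarrow> T \<subseteq> {1..<k} \<Longrightarrow> k \<notin> complete_above k T"
  by (auto simp: mem_complete_above)

lemma shifted_complete_above:
  assumes k: "0 < k" and T: "T \<subseteq> {1..<k}" and k_less: "k < m"
  shows "numerical_semigroup (shifted m (complete_above k T))"
    and "multiplicity_ns (shifted m (complete_above k T)) = m"
    and "frobenius (shifted m (complete_above k T)) = int (m + k)"
    and "depth (shifted m (complete_above k T)) = 2"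
    and "max_embedding_dim (shifted m (complete_above k T)) \<longleftrightarrow> ns_below k T"
  using numerical_semigroup_shifted multiplicity_shifted frobenius_shifted depth_shifted
    max_embedding_dim_shifted sumset_closed_complete_above_iff[OF T k_less]
    complete_above_basic[of k T] k T k_less
  by simp_all

lemma complete_above_recover:
  "T \<subseteq> {1..<k} \<Longrightarrow> {x \<in> {1..<k}. m + x \<in> shifted m (complete_above k T)} = T"
  by (auto simp: mem_shifted mem_complete_above)

lemma depth2_shifted_complete_above:
  assumes ns: "numerical_semigroup S" and fr: "frobenius S = int f" and dp: "depth S = 2"
  obtains k T where "1 \<le> k" "2 * k < f" "T \<subseteq> {1..<k}" "S = shifted (f - k) (complete_above k T)"
proof -
  define m where "m = multiplicity_ns S"
  have mS: "m \<in> S" and m0: "m \<noteq> 0" using multiplicity_ns_mem[OF ns] unfolding m_def by auto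
  have c: "conductor S = f + 1" using fr unfolding frobenius_def by linarith
  have big: "n \<in> S" if "f < n" for n using conductor_le_mem[OF ns] c that by simp
  have fS: "f \<notin> S" using conductor_pred_not_mem[OF ns] c by simp
  have "\<lceil>real (f + 1) / real m\<rceil> = 2" using dp unfolding depth_def c m_def by simp
  then have "real m < real (f + 1)" "real (f + 1) \<le> 2 * real m"
    using m0 by (simp_all add: ceiling_eq_iff less_divide_eq divide_le_eq)
  moreover have "m \<noteq> f" using mS fS by auto
  ultimately have mf: "m < f" and fm: "f < 2 * m" by linarith+
  define k where "k = f - m"
  define T where "T = {x \<in> {1..<k}. m + x \<in> S}"
  have "x \<in> S \<longleftrightarrow> x = 0 \<or> (m \<le> x \<and> (x - m = 0 \<or> x - m \<in> T \<or> k < x - m))" for x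
  proof (cases "x = 0 \<or> x < m")
    case True
    then show ?thesis
      using ns multiplicity_ns_le[of x S] unfolding numerical_semigroup_def m_def by auto
  next
    case False
    then have "m \<le> x" by simp
    moreover have "x - m = k \<Longrightarrow> x = f" using mf \<open>m \<le> x\<close> unfolding k_def by linarith
    then have "x - m \<noteq> k \<or> x \<notin> S" using fS by auto
    ultimately show ?thesis
      using mS big False mf unfolding T_def k_def by (cases "x - m < k") auto
  qed
  then have "S = shifted m (complete_above k T)" by (intro set_eqI) (simp add: mem_shifted mem_complete_above)
  moreover have "m = f - k" using mf unfolding k_def by simp
  moreover have "1 \<le> k" "2 * k < f" using mf fm unfolding k_def by auto
  moreover have "T \<subseteq> {1..<k}" unfolding T_def by auto
  ultimately show ?thesis using that by blast
qed

lemma MED2_semigroups_eq_image: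
  "{S. numerical_semigroup S \<and> max_embedding_dim S \<and> frobenius S = int f \<and> depth S = 2} =
   (\<lambda>(k, T). shifted (f - k) (complete_above k T)) ` (SIGMA k:{1..(f - 1) div 2}. {T. ns_below k T})"
proof (intro equalityI subsetI)
  fix S assume "S \<in> {S. numerical_semigroup S \<and> max_embedding_dim S \<and> frobenius S = int f \<and> depth S = 2}"
  then have S: "numerical_semigroup S" "max_embedding_dim S" "frobenius S = int f" "depth S = 2" by auto
  then obtain k T where kT: "1 \<le> k" "2 * k < f" "T \<subseteq> {1..<k}" "S = shifted (f - k) (complete_above k T)"
    using depth2_shifted_complete_above by metis
  then have "ns_below k T" using S(2) shifted_complete_above(5)[where m = "f - k"] kT by simp
  moreover have "k \<in> {1..(f - 1) div 2}" using kT by auto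
  ultimately show "S \<in> (\<lambda>(k, T). shifted (f - k) (complete_above k T)) ` (SIGMA k:{1..(f - 1) div 2}. {T. ns_below k T})"
    using kT(4) by blast
next
  fix S assume "S \<in> (\<lambda>(k, T). shifted (f - k) (complete_above k T)) ` (SIGMA k:{1..(f - 1) div 2}. {T. ns_below k T})"
  then obtain k T where "k \<in> {1..(f - 1) div 2}" "ns_below k T" "S = shifted (f - k) (complete_above k T)"
    by blast
  moreover from this have "0 < k" "T \<subseteq> {1..<k}" "k < f - k" "f - k + k = f"
    unfolding ns_below_def by auto
  ultimately show "S \<in> {S. numerical_semigroup S \<and> max_embedding_dim S \<and> frobenius S = int f \<and> depth S = 2}"
    using shifted_complete_above[where m = "f - k"] by auto
qed

lemma finite_ns_below: "finite {T. ns_below F T}"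
  by (rule finite_subset[of _ "Pow {1..<F}"]) (auto simp: ns_below_def)

lemma MED2_eq_sum_ns_count: "MED2 f = (\<Sum>k\<in>{1..(f - 1) div 2}. ns_count k)"
proof -
  have "inj_on (\<lambda>(k, T). shifted (f - k) (complete_above k T)) (SIGMA k:{1..(f - 1) div 2}. {T. ns_below k T})"
  proof (rule inj_onI, clarify)
    fix k T k' T'
    assume k: "k \<in> {1..(f - 1) div 2}" and T: "ns_below k T"
      and k': "k' \<in> {1..(f - 1) div 2}" and T': "ns_below k' T'"
      and eq: "shifted (f - k) (complete_above k T) = shifted (f - k') (complete_above k' T')"
    have sub: "T \<subseteq> {1..<k}" "T' \<subseteq> {1..<k'}" using T T' unfolding ns_below_def by auto
    have lt: "k < f - k" "k' < f - k'" using k k' by auto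
    then have "f - k = f - k'"
      using arg_cong[OF eq, of multiplicity_ns] k k' sub
        shifted_complete_above(2)[where m = "f - k"] shifted_complete_above(2)[where m = "f - k'"]
      by simp
    then have kk: "k = k'" using lt by arith
    have "T = {x \<in> {1..<k}. f - k + x \<in> shifted (f - k) (complete_above k T)}"
      using complete_above_recover[OF sub(1)] by simp
    also have "\<dots> = T'" using complete_above_recover[OF sub(2)] eq unfolding kk by simp
    finally show "k = k' \<and> T = T'" using kk by simp
  qed
  then have "MED2 f = card (SIGMA k:{1..(f - 1) div 2}. {T. ns_below k T})"
    unfolding MED2_def MED2_semigroups_eq_image by (rule card_image)
  also have "\<dots> = (\<Sum>k\<in>{1..(f - 1) div 2}. ns_count k)"
    unfolding ns_count_def using finite_ns_below by (simp add: card_SigmaI)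
  finally show ?thesis .
qed

section \<open>Numerical semigroups of given Frobenius number and multiplicity\<close>

lemma ns_below_finite: "ns_below F T \<Longrightarrow> finite T"
  unfolding ns_below_def using finite_subset by blast

definition ns_below_min :: "nat \<Rightarrow> nat \<Rightarrow> nat set set" where
  "ns_below_min F m = {T. ns_below F T \<and> T \<noteq> {} \<and> Min T = m}"

lemma mem_ns_below_min: "T \<in> ns_below_min F m \<longleftrightarrow> ns_below F T \<and> m \<in> T \<and> (\<forall>x\<in>T. m \<le> x)"
  unfolding ns_below_min_def using ns_below_finite
  by (auto intro: Min_in Min_eqI)

lemma finite_ns_below_min: "finite (ns_below_min F m)"
  using finite_ns_below by (rule finite_subset[rotated]) (auto simp: ns_below_min_def)

text \<open>A set without any element below half of \<open>F\<close> imposes no condition; every other set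
  has its minimum in \<open>{1..F div 2}\<close>.\<close>
lemma ns_count_split_min:
  "ns_count F = 2 ^ (F - F div 2 - 1) + (\<Sum>m\<in>{1..F div 2}. card (ns_below_min F m))"
proof -
  define H where "H = {F div 2 + 1..<F}"
  have "F < 2 * x" if "x \<in> H" for x using that unfolding H_def by simp presburger
  then have H_ns_below: "ns_below F T" if "T \<subseteq> H" for T
    using that unfolding ns_below_def by (fastforce simp: H_def)
  have "{T. ns_below F T} = Pow H \<union> (\<Union>m\<in>{1..F div 2}. ns_below_min F m)"
  proof (intro equalityI subsetI)
    fix T assume "T \<in> {T. ns_below F T}"
    then have T: "ns_below F T" by simp
    show "T \<in> Pow H \<union> (\<Union>m\<in>{1..F div 2}. ns_below_min F m)"
    proof (cases "T \<subseteq> H")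
      case False
      then obtain x where "x \<in> T" "x \<notin> H" by auto
      moreover from this have "x \<le> F div 2" using T unfolding ns_below_def H_def by auto
      moreover have "Min T \<in> T" "Min T \<le> x"
        using \<open>x \<in> T\<close> ns_below_finite[OF T] by (auto intro: Min_in)
      moreover from this have "1 \<le> Min T" using T unfolding ns_below_def by auto
      ultimately have "Min T \<in> {1..F div 2}" "T \<in> ns_below_min F (Min T)"
        using T unfolding ns_below_min_def by auto
      then show ?thesis by blast
    qed simp
  qed (auto simp: ns_below_min_def H_ns_below)
  moreover have "Pow H \<inter> (\<Union>m\<in>{1..F div 2}. ns_below_min F m) = {}"
  proof -
    have "\<not> T \<subseteq> H" if "T \<in> ns_below_min F m" "m \<in> {1..F div 2}" for T m
      using that unfolding mem_ns_below_min H_def by auto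
    then show ?thesis by blast
  qed
  moreover have "finite (\<Union>m\<in>{1..F div 2}. ns_below_min F m)"
    using finite_ns_below_min by blast
  ultimately have "ns_count F = card (Pow H) + card (\<Union>m\<in>{1..F div 2}. ns_below_min F m)"
    unfolding ns_count_def H_def by (simp add: card_Un_disjoint)
  also have "card (\<Union>m\<in>{1..F div 2}. ns_below_min F m) = (\<Sum>m\<in>{1..F div 2}. card (ns_below_min F m))"
    using finite_ns_below_min by (intro card_UN_disjoint) (auto simp: ns_below_min_def)
  finally show ?thesis unfolding H_def by (simp add: card_Pow)
qed

definition sum_avoiding :: "nat \<Rightarrow> nat set set" where
  "sum_avoiding d = {L. L \<subseteq> {0..d} \<and> 0 \<in> L \<and> (\<forall>a\<in>L. \<forall>b\<in>L. a + b \<noteq> d)}"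

definition shift_closed :: "nat \<Rightarrow> nat \<Rightarrow> nat set \<Rightarrow> bool" where
  "shift_closed d m L \<longleftrightarrow> (\<forall>a\<in>L. \<forall>b\<in>L. a + b + m \<le> d \<longrightarrow> a + b + m \<in> L)"

definition forced_sums :: "nat \<Rightarrow> nat \<Rightarrow> nat set \<Rightarrow> nat set" where
  "forced_sums d m L = {t \<in> sumset L. d < t + m \<and> t < d}"

lemma finite_sum_avoiding: "finite (sum_avoiding d)"
  by (rule finite_subset[of _ "Pow {0..d}"]) (auto simp: sum_avoiding_def)

lemma card_supersets_within:
  assumes "finite B" "A \<subseteq> B"
  shows "card {U. A \<subseteq> U \<and> U \<subseteq> B} = 2 ^ (card B - card A)"
proof -
  have "bij_betw (\<lambda>U. U - A) {U. A \<subseteq> U \<and> U \<subseteq> B} (Pow (B - A))"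
    by (rule bij_betw_byWitness[where f' = "\<lambda>V. V \<union> A"]) (use assms(2) in auto)
  then have "card {U. A \<subseteq> U \<and> U \<subseteq> B} = card (Pow (B - A))" by (rule bij_betw_same_card)
  then show ?thesis using assms by (simp add: card_Pow card_Diff_subset finite_subset)
qed

text \<open>A set \<open>T \<subseteq> {m..<2 m + d}\<close> splits into its part \<open>m + L\<close> in \<open>{m..m + d}\<close>, where all the
  constraints live, and its part \<open>U\<close> in the window \<open>{m + d<..<2 m + d}\<close>, which only has to
  contain the sums of two elements of \<open>m + L\<close> landing there.\<close>
lemma ns_below_shift_union_imp:
  assumes m_pos: "1 \<le> m" and L: "L \<subseteq> {0..d}" and U: "U \<subseteq> {m + d<..<2 * m + d}"
    and ns: "ns_below (2 * m + d) ((+) m ` L \<union> U)"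
  shows "(\<forall>a\<in>L. \<forall>b\<in>L. a + b \<noteq> d)" "shift_closed d m L"
    "(+) (2 * m) ` forced_sums d m L \<subseteq> U"
proof -
  let ?T = "(+) m ` L \<union> U"
  have sum_in: "2 * m + (a + b) \<in> ?T" if "a \<in> L" "b \<in> L" "a + b < d" for a b
  proof -
    have "m + a \<in> ?T" "m + b \<in> ?T" "(m + a) + (m + b) < 2 * m + d" using that by auto
    then have "(m + a) + (m + b) \<in> ?T" using ns unfolding ns_below_def by blast
    moreover have "(m + a) + (m + b) = 2 * m + (a + b)" by simp
    ultimately show ?thesis by simp
  qed
  show "\<forall>a\<in>L. \<forall>b\<in>L. a + b \<noteq> d"
  proof (intro ballI notI)
    fix a b assume "a \<in> L" "b \<in> L" "a + b = d"
    then have "m + a \<in> ?T" "m + b \<in> ?T" "(m + a) + (m + b) = 2 * m + d" by auto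
    then show False using ns unfolding ns_below_def by blast
  qed
  show "shift_closed d m L"
    unfolding shift_closed_def
  proof (intro ballI impI)
    fix a b assume "a \<in> L" "b \<in> L" "a + b + m \<le> d"
    then have "2 * m + (a + b) \<in> ?T" using sum_in m_pos by simp
    moreover have "2 * m + (a + b) = m + (a + b + m)" by simp
    ultimately have "m + (a + b + m) \<in> ?T" by metis
    then show "a + b + m \<in> L" using U \<open>a + b + m \<le> d\<close> by auto
  qed
  show "(+) (2 * m) ` forced_sums d m L \<subseteq> U"
  proof
    fix x assume "x \<in> (+) (2 * m) ` forced_sums d m L"
    then obtain a b where "a \<in> L" "b \<in> L" "d < a + b + m" "a + b < d" "x = 2 * m + (a + b)"
      unfolding forced_sums_def sumset_def by auto
    then show "x \<in> U" using sum_in[of a b] L by auto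
  qed
qed

lemma ns_below_shift_unionI:
  assumes m_pos: "1 \<le> m" and L: "L \<subseteq> {0..d}" and U: "U \<subseteq> {m + d<..<2 * m + d}"
    and avoid: "\<forall>a\<in>L. \<forall>b\<in>L. a + b \<noteq> d" and closed: "shift_closed d m L"
    and forced: "(+) (2 * m) ` forced_sums d m L \<subseteq> U"
  shows "ns_below (2 * m + d) ((+) m ` L \<union> U)"
proof -
  let ?T = "(+) m ` L \<union> U"
  have "y + z \<noteq> 2 * m + d \<and> (y + z < 2 * m + d \<longrightarrow> y + z \<in> ?T)" if yz: "y \<in> ?T" "z \<in> ?T" for y z
  proof (cases "y \<in> U \<or> z \<in> U")
    case True
    have "m \<le> x" if "x \<in> ?T" for x using that U by auto
    moreover have "m + d < y \<or> m + d < z" using True U by auto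
    ultimately have "2 * m + d < y + z" using yz by fastforce
    then show ?thesis by simp
  next
    case False
    then obtain a b where ab: "a \<in> L" "b \<in> L" "y = m + a" "z = m + b" using yz by blast
    have "y + z \<in> ?T" if "a + b < d"
    proof (cases "a + b + m \<le> d")
      case True
      then have "a + b + m \<in> L" using closed ab unfolding shift_closed_def by blast
      moreover have "y + z = m + (a + b + m)" using ab by simp
      ultimately show ?thesis by blast
    next
      case False
      then have "a + b \<in> forced_sums d m L"
        using ab \<open>a + b < d\<close> unfolding forced_sums_def sumset_def by auto
      then have "2 * m + (a + b) \<in> U" using forced by blast
      moreover have "y + z = 2 * m + (a + b)" using ab by simp
      ultimately show ?thesis by simp
    qed
    then show ?thesis using ab avoid by auto
  qed
  moreover have "?T \<subseteq> {1..<2 * m + d}" using L U m_pos by auto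
  ultimately show ?thesis unfolding ns_below_def by blast
qed

lemma ns_below_shift_union_iff:
  assumes "1 \<le> m" "L \<subseteq> {0..d}" "U \<subseteq> {m + d<..<2 * m + d}"
  shows "ns_below (2 * m + d) ((+) m ` L \<union> U) \<longleftrightarrow>
    (\<forall>a\<in>L. \<forall>b\<in>L. a + b \<noteq> d) \<and> shift_closed d m L \<and> (+) (2 * m) ` forced_sums d m L \<subseteq> U"
  using ns_below_shift_union_imp[OF assms] ns_below_shift_unionI[OF assms] by blast

lemma shift_union_split:
  fixes m d :: nat
  assumes "\<forall>x\<in>T. m \<le> x \<and> x < 2 * m + d"
  shows "(+) m ` {x. x \<le> d \<and> m + x \<in> T} \<union> T \<inter> {m + d<..<2 * m + d} = T"
proof (intro equalityI subsetI)
  fix x assume "x \<in> T"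
  then show "x \<in> (+) m ` {x. x \<le> d \<and> m + x \<in> T} \<union> T \<inter> {m + d<..<2 * m + d}"
    using assms by (cases "x \<le> m + d") (auto intro!: image_eqI[of _ _ "x - m"])
qed auto

lemma bij_betw_ns_below_min_split:
  assumes m_pos: "1 \<le> m"
  shows "bij_betw (\<lambda>T. ({x. x \<le> d \<and> m + x \<in> T}, T \<inter> {m + d<..<2 * m + d}))
    (ns_below_min (2 * m + d) m)
    (SIGMA L:{L. L \<in> sum_avoiding d \<and> shift_closed d m L}.
      {U. (+) (2 * m) ` forced_sums d m L \<subseteq> U \<and> U \<subseteq> {m + d<..<2 * m + d}})"
proof -
  define W where "W = {m + d<..<2 * m + d}"
  define P where "P = (SIGMA L:{L. L \<in> sum_avoiding d \<and> shift_closed d m L}.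
    {U. (+) (2 * m) ` forced_sums d m L \<subseteq> U \<and> U \<subseteq> W})"
  define split where "split = (\<lambda>T. ({x. x \<le> d \<and> m + x \<in> T}, T \<inter> W))"
  define join where "join = (\<lambda>(L, U). (+) m ` L \<union> U)"
  have join_mem: "join (L, U) \<in> ns_below_min (2 * m + d) m \<longleftrightarrow> (L, U) \<in> P"
    if "L \<subseteq> {0..d}" "U \<subseteq> W" for L U
  proof -
    have "(\<forall>x\<in>join (L, U). m \<le> x) \<and> (m \<in> join (L, U) \<longleftrightarrow> 0 \<in> L)"
      using that unfolding join_def W_def by auto
    then show ?thesis
      using ns_below_shift_union_iff[OF m_pos that[unfolded W_def]] that
      unfolding mem_ns_below_min P_def sum_avoiding_def join_def by auto
  qed
  have "bij_betw split (ns_below_min (2 * m + d) m) P"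
  proof (rule bij_betw_byWitness[where f' = join])
    have T_range: "\<forall>x\<in>T. m \<le> x \<and> x < 2 * m + d" if "T \<in> ns_below_min (2 * m + d) m" for T
      using that unfolding mem_ns_below_min ns_below_def by auto
    then show "\<forall>T\<in>ns_below_min (2 * m + d) m. join (split T) = T"
      unfolding join_def split_def W_def by (simp add: shift_union_split)
    show "\<forall>p\<in>P. split (join p) = p"
      unfolding P_def sum_avoiding_def split_def join_def W_def by auto
    show "split ` ns_below_min (2 * m + d) m \<subseteq> P"
    proof
      fix p assume "p \<in> split ` ns_below_min (2 * m + d) m"
      then obtain T where T: "T \<in> ns_below_min (2 * m + d) m" "p = split T" by blast
      moreover have "fst p \<subseteq> {0..d}" "snd p \<subseteq> W" using T unfolding split_def by auto
      moreover have "join p = T"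
        using T T_range[OF T(1)] unfolding join_def split_def W_def by (simp add: shift_union_split)
      ultimately show "p \<in> P" using join_mem[of "fst p" "snd p"] by simp
    qed
    show "join ` P \<subseteq> ns_below_min (2 * m + d) m"
      using join_mem unfolding P_def sum_avoiding_def by auto
  qed
  then show ?thesis unfolding split_def P_def W_def .
qed

lemma card_ns_below_min_eq_sum:
  assumes m_pos: "1 \<le> m"
  shows "card (ns_below_min (2 * m + d) m) =
    (\<Sum>L | L \<in> sum_avoiding d \<and> shift_closed d m L. 2 ^ (m - 1 - card (forced_sums d m L)))"
proof -
  define W where "W = {m + d<..<2 * m + d}"
  define V where "V = {L. L \<in> sum_avoiding d \<and> shift_closed d m L}"
  have "card (ns_below_min (2 * m + d) m) =
      card (SIGMA L:V. {U. (+) (2 * m) ` forced_sums d m L \<subseteq> U \<and> U \<subseteq> W})"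
    unfolding V_def W_def by (rule bij_betw_same_card[OF bij_betw_ns_below_min_split[OF m_pos]])
  also have "\<dots> = (\<Sum>L\<in>V. card {U. (+) (2 * m) ` forced_sums d m L \<subseteq> U \<and> U \<subseteq> W})"
    using finite_sum_avoiding unfolding V_def W_def by (intro card_SigmaI) auto
  also have "\<dots> = (\<Sum>L\<in>V. 2 ^ (m - 1 - card (forced_sums d m L)))"
  proof (rule sum.cong)
    fix L
    have "(+) (2 * m) ` forced_sums d m L \<subseteq> W" unfolding W_def forced_sums_def by auto
    moreover have "card W = m - 1" unfolding W_def by simp
    moreover have "card ((+) (2 * m) ` forced_sums d m L) = card (forced_sums d m L)"
      by (simp add: card_image)
    ultimately show "card {U. (+) (2 * m) ` forced_sums d m L \<subseteq> U \<and> U \<subseteq> W} =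
        2 ^ (m - 1 - card (forced_sums d m L))"
      using card_supersets_within[of W] unfolding W_def by simp
  qed simp
  finally show ?thesis unfolding V_def .
qed

definition avoid_weight :: "nat \<Rightarrow> real" where
  "avoid_weight d = (\<Sum>L\<in>sum_avoiding d. (1/2) ^ card (sumset L \<inter> {..<d}))"

definition generated_sums :: "nat \<Rightarrow> nat \<Rightarrow> nat set \<Rightarrow> nat set" where
  "generated_sums d m L = (+) m ` {t \<in> sumset L. t + m \<le> d}"

lemma avoid_weight_nonneg: "0 \<le> avoid_weight d"
  unfolding avoid_weight_def by (intro sum_nonneg) simp

lemma power_two_diff: "c \<le> k \<Longrightarrow> (2::real) ^ (k - c) = 2 ^ k * (1/2) ^ c"
  by (simp add: power_diff power_one_over)

lemma card_forced_sums_le: "card (forced_sums d m L) \<le> m - 1"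
proof -
  have "forced_sums d m L \<subseteq> {d - (m - 1)..<d}" unfolding forced_sums_def by auto
  then have "card (forced_sums d m L) \<le> card {d - (m - 1)..<d}" by (intro card_mono) auto
  then show ?thesis by simp
qed

context
  fixes d m :: nat
  assumes m_pos: "1 \<le> m"
begin

lemma generated_sums_subset: "shift_closed d m L \<Longrightarrow> generated_sums d m L \<subseteq> L"
  unfolding generated_sums_def sumset_def shift_closed_def by (auto simp: add.commute)

lemma zero_not_generated: "0 \<notin> generated_sums d m L"
  using m_pos unfolding generated_sums_def by auto

lemma card_sumset_below_split:
  "card (sumset L \<inter> {..<d}) = card (forced_sums d m L) + card (generated_sums d m L)"
proof -
  have "sumset L \<inter> {..<d} = forced_sums d m L \<union> {t \<in> sumset L. t + m \<le> d}"
    unfolding forced_sums_def using m_pos by auto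
  moreover have "finite (forced_sums d m L)" "finite {t \<in> sumset L. t + m \<le> d}"
    by (rule finite_subset[of _ "{..d}"]; auto simp: forced_sums_def)+
  moreover have "forced_sums d m L \<inter> {t \<in> sumset L. t + m \<le> d} = {}"
    unfolding forced_sums_def by auto
  ultimately show ?thesis unfolding generated_sums_def by (simp add: card_Un_disjoint card_image)
qed

text \<open>An element of \<open>generated_sums d m L\<close> is \<open>m\<close> plus a sum of two smaller elements of \<open>L\<close>,
  so \<open>L\<close> can be rebuilt from \<open>L - Y\<close> by induction on the size of its elements.\<close>
lemma remove_generated_inj:
  "inj_on (\<lambda>(L, Y). L - Y) (SIGMA L:{L. shift_closed d m L}. Pow (generated_sums d m L))"
proof (rule inj_onI, clarify)
  fix L0 Y0 L1 Y1
  assume L0: "shift_closed d m L0" and Y0: "Y0 \<subseteq> generated_sums d m L0"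
    and L1: "shift_closed d m L1" and Y1: "Y1 \<subseteq> generated_sums d m L1"
    and eq: "L0 - Y0 = L1 - Y1"
  have step: "x \<in> L'"
    if closed: "shift_closed d m L'" and Y: "Y \<subseteq> generated_sums d m L" and diff: "L - Y = L' - Y'"
      and below: "\<And>y. y < x \<Longrightarrow> y \<in> L \<longleftrightarrow> y \<in> L'" and x: "x \<in> L"
    for L Y L' Y' x
  proof (cases "x \<in> Y")
    case True
    then obtain a b where ab: "a \<in> L" "b \<in> L" "a + b + m \<le> d" "x = m + (a + b)"
      using Y unfolding generated_sums_def sumset_def by auto
    then have "a \<in> L'" "b \<in> L'" using below m_pos by auto
    then show ?thesis using closed ab unfolding shift_closed_def by (simp add: add.commute)
  qed (use diff x in blast)
  have "x \<in> L0 \<longleftrightarrow> x \<in> L1" for x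
  proof (induction x rule: less_induct)
    case (less x)
    then show ?case using step[OF L1 Y0 eq] step[OF L0 Y1 eq[symmetric]] by blast
  qed
  then have "L0 = L1" by blast
  moreover have "Y0 = L0 - (L0 - Y0)" "Y1 = L1 - (L1 - Y1)"
    using Y0 Y1 generated_sums_subset[OF L0] generated_sums_subset[OF L1] by auto
  ultimately show "L0 = L1 \<and> Y0 = Y1" using eq by metis
qed

lemma finite_generated_sums: "finite (generated_sums d m L)"
  unfolding generated_sums_def by (rule finite_imageI, rule finite_subset[of _ "{..d}"]) auto

lemma forced_weight_le_sum_removals:
  "(1/2::real) ^ card (forced_sums d m L) \<le>
     (\<Sum>Y\<in>Pow (generated_sums d m L). (1/2) ^ card (sumset (L - Y) \<inter> {..<d}))"
proof -
  have "(1/2::real) ^ card (forced_sums d m L) =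
      (\<Sum>Y\<in>Pow (generated_sums d m L). (1/2) ^ card (sumset L \<inter> {..<d}))"
    unfolding card_sumset_below_split using finite_generated_sums
    by (simp add: card_Pow power_add power_one_over)
  also have "\<dots> \<le> (\<Sum>Y\<in>Pow (generated_sums d m L). (1/2) ^ card (sumset (L - Y) \<inter> {..<d}))"
  proof (rule sum_mono)
    fix Y
    have "card (sumset (L - Y) \<inter> {..<d}) \<le> card (sumset L \<inter> {..<d})"
      using sumset_mono[of "L - Y" L] by (intro card_mono) auto
    then show "(1/2::real) ^ card (sumset L \<inter> {..<d}) \<le> (1/2) ^ card (sumset (L - Y) \<inter> {..<d})"
      by (intro power_decreasing) auto
  qed
  finally show ?thesis .
qed

lemma sum_forced_sums_le_avoid_weight:
  "(\<Sum>L | L \<in> sum_avoiding d \<and> shift_closed d m L. (1/2::real) ^ card (forced_sums d m L))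
     \<le> avoid_weight d"
proof -
  define V where "V = {L. L \<in> sum_avoiding d \<and> shift_closed d m L}"
  define w where "w L = (1/2::real) ^ card (sumset L \<inter> {..<d})" for L
  define P where "P = (SIGMA L:V. Pow (generated_sums d m L))"
  have "(\<Sum>L\<in>V. (1/2::real) ^ card (forced_sums d m L)) \<le> (\<Sum>L\<in>V. \<Sum>Y\<in>Pow (generated_sums d m L). w (L - Y))"
    unfolding w_def by (intro sum_mono forced_weight_le_sum_removals)
  also have "\<dots> = (\<Sum>(L, Y)\<in>P. w (L - Y))"
    unfolding P_def V_def using finite_sum_avoiding finite_generated_sums by (subst sum.Sigma) auto
  also have "\<dots> = (\<Sum>L'\<in>(\<lambda>(L, Y). L - Y) ` P. w L')"
  proof -
    have "inj_on (\<lambda>(L, Y). L - Y) P"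
      using remove_generated_inj by (rule inj_on_subset) (auto simp: P_def V_def)
    then show ?thesis by (simp add: sum.reindex comp_def split_def)
  qed
  also have "\<dots> \<le> (\<Sum>L'\<in>sum_avoiding d. w L')"
  proof (rule sum_mono2[OF finite_sum_avoiding])
    show "(\<lambda>(L, Y). L - Y) ` P \<subseteq> sum_avoiding d"
    proof clarify
      fix L Y assume "(L, Y) \<in> P"
      then have "L \<in> sum_avoiding d" "0 \<notin> Y" using zero_not_generated unfolding P_def V_def by auto
      then show "L - Y \<in> sum_avoiding d" unfolding sum_avoiding_def by auto
    qed
  qed (simp add: w_def)
  finally show ?thesis unfolding V_def avoid_weight_def w_def .
qed

lemma card_ns_below_min_le:
  "real (card (ns_below_min (2 * m + d) m)) \<le> 2 ^ (m - 1) * avoid_weight d"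
proof -
  have "real (card (ns_below_min (2 * m + d) m)) =
      2 ^ (m - 1) * (\<Sum>L | L \<in> sum_avoiding d \<and> shift_closed d m L. (1/2) ^ card (forced_sums d m L))"
    unfolding card_ns_below_min_eq_sum[OF m_pos] of_nat_sum sum_distrib_left
    by (intro sum.cong refl) (simp only: of_nat_power of_nat_numeral power_two_diff[OF card_forced_sums_le])
  also have "\<dots> \<le> 2 ^ (m - 1) * avoid_weight d"
    by (intro mult_left_mono sum_forced_sums_le_avoid_weight) simp
  finally show ?thesis .
qed

lemma card_ns_below_min_eq:
  assumes "d < m"
  shows "real (card (ns_below_min (2 * m + d) m)) = 2 ^ (m - 1) * avoid_weight d"
proof -
  have forced: "forced_sums d m L = sumset L \<inter> {..<d}" for L
    using assms unfolding forced_sums_def by auto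
  have "{L. L \<in> sum_avoiding d \<and> shift_closed d m L} = sum_avoiding d"
    using assms unfolding shift_closed_def by auto
  then show ?thesis
    unfolding card_ns_below_min_eq_sum[OF m_pos] avoid_weight_def of_nat_sum sum_distrib_left
    unfolding of_nat_power of_nat_numeral power_two_diff[OF card_forced_sums_le]
    by (intro sum.cong refl)
      (simp_all add: forced)
qed

end

section \<open>The weight of sum-avoiding sets\<close>

lemma card_sumset_ge:
  assumes fin: "finite A" and ne: "A \<noteq> {}"
  shows "2 * card A \<le> card (sumset A) + 1"
proof -
  define X where "X = (+) (Min A) ` A"
  define Y where "Y = (+) (Max A) ` A"
  have "X \<inter> Y \<subseteq> {Min A + Max A}"
  proof
    fix z assume "z \<in> X \<inter> Y"
    then obtain x y where "x \<in> A" "y \<in> A" "z = Min A + x" "z = Max A + y"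
      unfolding X_def Y_def by auto
    moreover from this have "x \<le> Max A" "Min A \<le> y" using fin by auto
    ultimately show "z \<in> {Min A + Max A}" by simp
  qed
  then have "card (X \<inter> Y) \<le> 1" using card_mono[of "{Min A + Max A}"] by fastforce
  moreover have "Min A \<in> A" "Max A \<in> A" using fin ne by auto
  then have "X \<union> Y \<subseteq> sumset A" unfolding X_def Y_def sumset_def by blast
  then have "card (X \<union> Y) \<le> card (sumset A)" using finite_sumset[OF fin] by (intro card_mono)
  moreover have "card X + card Y = card (X \<union> Y) + card (X \<inter> Y)"
    using fin unfolding X_def Y_def by (intro card_Un_Int) auto
  moreover have "card X = card A" "card Y = card A" unfolding X_def Y_def by (simp_all add: card_image)
  ultimately show ?thesis by linarith
qed

lemma sum_Pow_half_power_diff_le: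
  assumes fQ: "finite Q"
  shows "(\<Sum>X\<in>Pow Q. (1/2::real) ^ card (X - P)) \<le> (3/2) ^ card Q * (4/3) ^ card (Q \<inter> P)"
proof -
  define g where "g x = (if x \<in> P then 1 else (1/2::real))" for x
  have "(\<Sum>X\<in>Pow Q. (1/2::real) ^ card (X - P)) = (\<Sum>X\<in>Pow Q. (\<Prod>x\<in>X. g x) * (\<Prod>x\<in>Q - X. 1))"
  proof (rule sum.cong)
    fix X assume "X \<in> Pow Q"
    then have "finite X" using fQ finite_subset by auto
    then have "(\<Prod>x\<in>X. g x) = (\<Prod>x\<in>X \<inter> P. 1) * (\<Prod>x\<in>X - P. 1/2)"
      unfolding g_def by (simp add: prod.If_cases Diff_eq)
    then show "(1/2::real) ^ card (X - P) = (\<Prod>x\<in>X. g x) * (\<Prod>x\<in>Q - X. 1)" by simp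
  qed simp
  also have "\<dots> = (\<Prod>x\<in>Q. g x + 1)" using fQ by (rule prod_add[symmetric])
  also have "\<dots> = (\<Prod>x\<in>Q. (3/2::real)) * (\<Prod>x\<in>Q. if x \<in> P then 4/3 else 1)"
    unfolding g_def prod.distrib[symmetric] by (intro prod.cong) auto
  also have "(\<Prod>x\<in>Q. if x \<in> P then 4/3 else (1::real)) = (4/3) ^ card (Q \<inter> P)"
    using fQ by (simp add: prod.If_cases Int_def)
  finally show ?thesis by simp
qed

lemma sum_subsets_containing_zero:
  fixes c :: real
  assumes "1 \<le> h"
  shows "(\<Sum>X | X \<subseteq> {..<h} \<and> 0 \<in> X. c ^ card X) = c * (1 + c) ^ (h - 1)"
proof -
  have "{X. X \<subseteq> {..<h} \<and> 0 \<in> X} = insert 0 ` Pow {1..<h}"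
  proof (intro equalityI subsetI)
    fix X assume "X \<in> {X. X \<subseteq> {..<h} \<and> 0 \<in> X}"
    then have "X = insert 0 (X - {0})" "X - {0} \<in> Pow {1..<h}" by auto
    then show "X \<in> insert 0 ` Pow {1..<h}" by blast
  qed (use assms in auto)
  moreover have "inj_on (insert 0) (Pow {1..<h})"
    by (rule inj_onI) (metis Diff_insert_absorb PowD atLeastLessThan_iff not_one_le_zero subset_iff)
  ultimately have "(\<Sum>X | X \<subseteq> {..<h} \<and> 0 \<in> X. c ^ card X) = (\<Sum>X\<in>Pow {1..<h}. c ^ card (insert 0 X))"
    by (simp add: sum.reindex)
  also have "\<dots> = c * (\<Sum>X\<in>Pow {1..<h}. (\<Prod>x\<in>X. c) * (\<Prod>x\<in>{1..<h} - X. 1))"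
    unfolding sum_distrib_left
    by (intro sum.cong refl) (auto simp: finite_subset card_insert_if)
  also have "\<dots> = c * (\<Prod>x\<in>{1..<h}. c + 1)" by (subst prod_add) simp_all
  finally show ?thesis by (simp add: add.commute)
qed

text \<open>Elements of \<open>L\<close> from the upper half of \<open>{0..<d}\<close> must avoid the reflections \<open>d - a\<close>
  of elements \<open>a\<close> from the lower half.\<close>
lemma card_upper_minus_reflection:
  assumes hs: "h1 + h2 = d" "h1 \<le> h2 + 1" and L1: "L1 \<subseteq> {..<h1}" "0 \<in> L1"
  shows "card ({h1..<d} - (\<lambda>a. d - a) ` L1) + card L1 = h2 + 1"
proof -
  have "d \<in> (\<lambda>a. d - a) ` L1" using L1(2) by (intro image_eqI[of _ _ 0]) auto
  then have "(\<lambda>a. d - a) ` L1 = insert d ((\<lambda>a. d - a) ` (L1 - {0}))" by auto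
  then have eq: "{h1..<d} - (\<lambda>a. d - a) ` L1 = {h1..<d} - (\<lambda>a. d - a) ` (L1 - {0})" by auto
  have sub: "(\<lambda>a. d - a) ` (L1 - {0}) \<subseteq> {h1..<d}"
    unfolding image_subset_iff
  proof
    fix a assume "a \<in> L1 - {0}"
    then have "0 < a" "a < h1" using L1 by auto
    then show "d - a \<in> {h1..<d}" using hs by auto
  qed
  have "inj_on (\<lambda>a. d - a) (L1 - {0})" using L1(1) hs by (intro inj_onI) auto
  then have "card ((\<lambda>a. d - a) ` (L1 - {0})) = card L1 - 1"
    using L1 finite_subset by (simp add: card_image)
  moreover have "1 \<le> card L1" using L1 finite_subset by (metis One_nat_def Suc_leI card_gt_0_iff empty_iff finite_lessThan)
  moreover have "card ((\<lambda>a. d - a) ` (L1 - {0})) \<le> h2" using card_mono[OF _ sub] hs by simp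
  ultimately show ?thesis
    unfolding eq using card_Diff_subset[OF _ sub] finite_subset[OF sub] hs by simp
qed

lemma sum_avoiding_halves:
  assumes hs: "h1 + h2 = d" "h1 \<le> h2 + 1" and L: "L \<in> sum_avoiding d"
  shows "L \<inter> {h1..<d} \<subseteq> {h1..<d} - (\<lambda>a. d - a) ` (L \<inter> {..<h1})"
    and "L \<inter> {..<h1} \<union> L \<inter> {h1..<d} = L"
    and "(1/2::real) ^ card (sumset L \<inter> {..<d}) \<le>
      (1/2) ^ card (sumset (L \<inter> {..<h1})) * (1/2) ^ card (L \<inter> {h1..<d} - sumset (L \<inter> {..<h1}))"
proof -
  define L1 where "L1 = L \<inter> {..<h1}"
  define L2 where "L2 = L \<inter> {h1..<d}"
  have L0: "0 \<in> L" and Lsub: "L \<subseteq> {0..d}" and avoid: "\<And>a b. a \<in> L \<Longrightarrow> b \<in> L \<Longrightarrow> a + b \<noteq> d"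
    using L unfolding sum_avoiding_def by auto
  have Ld: "L \<subseteq> {..<d}"
  proof
    fix x assume "x \<in> L"
    then have "x \<le> d" "x \<noteq> d" using Lsub avoid[OF L0] by auto
    then show "x \<in> {..<d}" by simp
  qed
  show "L2 \<subseteq> {h1..<d} - (\<lambda>a. d - a) ` L1"
  proof
    fix x assume x: "x \<in> L2"
    have "x \<noteq> d - a" if "a \<in> L1" for a
    proof
      assume "x = d - a"
      moreover have "a < h1" "a \<in> L" using that unfolding L1_def by auto
      ultimately have "a + x = d" using hs by simp
      then show False using avoid \<open>a \<in> L\<close> x unfolding L2_def by auto
    qed
    then show "x \<in> {h1..<d} - (\<lambda>a. d - a) ` L1" using x unfolding L2_def by auto
  qed
  show "L1 \<union> L2 = L" unfolding L1_def L2_def using Ld by auto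
  have "sumset L1 \<subseteq> sumset L \<inter> {..<d}"
  proof
    fix t assume "t \<in> sumset L1"
    then obtain a b where "a \<in> L1" "b \<in> L1" "t = a + b" unfolding sumset_def by auto
    then show "t \<in> sumset L \<inter> {..<d}" using hs unfolding L1_def sumset_def by auto
  qed
  moreover have "L2 \<subseteq> sumset L \<inter> {..<d}"
    using self_subset_sumset[OF L0] Ld unfolding L2_def by auto
  ultimately have "card (sumset L1 \<union> (L2 - sumset L1)) \<le> card (sumset L \<inter> {..<d})"
    by (intro card_mono) auto
  moreover have "card (sumset L1 \<union> (L2 - sumset L1)) = card (sumset L1) + card (L2 - sumset L1)"
    using finite_sumset[of L1] unfolding L1_def L2_def by (intro card_Un_disjoint) auto
  ultimately show "(1/2::real) ^ card (sumset L \<inter> {..<d}) \<le> (1/2) ^ card (sumset L1) * (1/2) ^ card (L2 - sumset L1)"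
    by (simp add: power_add[symmetric] power_decreasing)
qed

lemma avoid_weight_le_split:
  assumes hs: "h1 + h2 = d" "h1 \<le> h2 + 1" "1 \<le> h1"
  shows "avoid_weight d \<le> (\<Sum>L1 | L1 \<subseteq> {..<h1} \<and> 0 \<in> L1.
           \<Sum>L2\<in>Pow ({h1..<d} - (\<lambda>a. d - a) ` L1).
             (1/2::real) ^ card (sumset L1) * (1/2) ^ card (L2 - sumset L1))"
proof -
  define A1 where "A1 = {L1. L1 \<subseteq> {..<h1} \<and> 0 \<in> L1}"
  define Q where "Q L1 = {h1..<d} - (\<lambda>a. d - a) ` L1" for L1
  define g where "g p = (1/2::real) ^ card (sumset (fst p)) * (1/2) ^ card (snd p - sumset (fst p))" for p
  have finA1: "finite A1" by (rule finite_subset[of _ "Pow {..<h1}"]) (auto simp: A1_def)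
  have finQ: "finite (Q L1)" for L1 unfolding Q_def by simp
  have "avoid_weight d \<le> sum g (SIGMA L1:A1. Pow (Q L1))"
    unfolding avoid_weight_def
  proof (rule sum_le_included[where i = "\<lambda>p. fst p \<union> snd p"])
    show "\<forall>L\<in>sum_avoiding d. \<exists>p\<in>(SIGMA L1:A1. Pow (Q L1)).
        fst p \<union> snd p = L \<and> (1/2) ^ card (sumset L \<inter> {..<d}) \<le> g p"
    proof
      fix L assume L: "L \<in> sum_avoiding d"
      then have "(L \<inter> {..<h1}, L \<inter> {h1..<d}) \<in> (SIGMA L1:A1. Pow (Q L1))"
        using sum_avoiding_halves(1)[OF hs(1,2) L] hs(3) unfolding A1_def Q_def sum_avoiding_def by auto
      then show "\<exists>p\<in>(SIGMA L1:A1. Pow (Q L1)). fst p \<union> snd p = L \<and> (1/2) ^ card (sumset L \<inter> {..<d}) \<le> g p"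
        using sum_avoiding_halves(2,3)[OF hs(1,2) L] unfolding g_def by (intro bexI) auto
    qed
  qed (use finite_sum_avoiding finA1 finQ in \<open>auto simp: g_def\<close>)
  also have "\<dots> = (\<Sum>L1\<in>A1. \<Sum>L2\<in>Pow (Q L1). g (L1, L2))"
    using finA1 finQ by (subst sum.Sigma) auto
  finally show ?thesis unfolding A1_def Q_def g_def by simp
qed

lemma power_two_thirds_identity:
  assumes "q + c = h + 1" "1 \<le> c"
  shows "(2/3::real) ^ (2 * c - 1) * (3/2) ^ q = (3/2) ^ (h + 2) * (8/27) ^ c"
proof -
  have e1: "h + 2 = q + (c + 1)" and e2: "3 * c = (2 * c - 1) + (c + 1)" using assms by simp_all
  have "(8/27::real) ^ c = (2/3) ^ (3 * c)" by (simp add: power_mult power3_eq_cube)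
  then have "(3/2::real) ^ (h + 2) * (8/27) ^ c = (3/2) ^ q * (3/2) ^ (c + 1) * (2/3) ^ (3 * c)"
    unfolding e1 by (simp add: power_add)
  also have "\<dots> = (3/2) ^ q * (2/3) ^ (2 * c - 1) * ((3/2) ^ (c + 1) * (2/3) ^ (c + 1))"
    unfolding e2 power_add by (simp add: algebra_simps)
  also have "(3/2::real) ^ (c + 1) * (2/3) ^ (c + 1) = 1" by (simp flip: power_mult_distrib)
  finally show ?thesis by simp
qed

lemma sum_upper_parts_le:
  assumes hs: "h1 + h2 = d" "h1 \<le> h2 + 1" and L1: "L1 \<subseteq> {..<h1}" "0 \<in> L1"
  shows "(\<Sum>L2\<in>Pow ({h1..<d} - (\<lambda>a. d - a) ` L1).
           (1/2::real) ^ card (sumset L1) * (1/2) ^ card (L2 - sumset L1))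
         \<le> (3/2) ^ (h2 + 2) * (8/27) ^ card L1"
proof -
  define Q where "Q = {h1..<d} - (\<lambda>a. d - a) ` L1"
  define c where "c = card L1"
  define s where "s = card (sumset L1)"
  have finL1: "finite L1" using L1 finite_subset by blast
  have c1: "1 \<le> c" unfolding c_def using finL1 L1(2) by (metis One_nat_def Suc_leI card_gt_0_iff empty_iff)
  have s_ge: "2 * c - 1 \<le> s" using card_sumset_ge[OF finL1] L1(2) unfolding c_def s_def by force
  have cQ: "card Q + c = h2 + 1" unfolding Q_def c_def by (rule card_upper_minus_reflection[OF hs L1])
  have "(\<Sum>L2\<in>Pow Q. (1/2::real) ^ s * (1/2) ^ card (L2 - sumset L1))
      = (1/2) ^ s * (\<Sum>L2\<in>Pow Q. (1/2) ^ card (L2 - sumset L1))"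
    by (simp add: sum_distrib_left)
  also have "\<dots> \<le> (1/2) ^ s * ((3/2) ^ card Q * (4/3) ^ s)"
  proof -
    have "card (Q \<inter> sumset L1) \<le> s" unfolding s_def using finite_sumset[OF finL1] by (intro card_mono) auto
    have "(\<Sum>L2\<in>Pow Q. (1/2::real) ^ card (L2 - sumset L1)) \<le> (3/2) ^ card Q * (4/3) ^ card (Q \<inter> sumset L1)"
      by (rule sum_Pow_half_power_diff_le) (simp add: Q_def)
    also have "\<dots> \<le> (3/2) ^ card Q * (4/3) ^ s"
      using \<open>card (Q \<inter> sumset L1) \<le> s\<close> by (intro mult_left_mono power_increasing) auto
    finally have "(\<Sum>L2\<in>Pow Q. (1/2::real) ^ card (L2 - sumset L1)) \<le> (3/2) ^ card Q * (4/3) ^ s" .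
    then show ?thesis by (intro mult_left_mono) auto
  qed
  also have "\<dots> = (2/3) ^ s * (3/2) ^ card Q"
  proof -
    have "(1/2::real) ^ s * (4/3) ^ s = (2/3) ^ s" by (simp flip: power_mult_distrib)
    then show ?thesis by (metis mult.assoc mult.commute)
  qed
  also have "\<dots> \<le> (2/3) ^ (2 * c - 1) * (3/2) ^ card Q"
    using s_ge by (intro mult_right_mono power_decreasing) auto
  also have "\<dots> = (3/2) ^ (h2 + 2) * (8/27) ^ c"
    using cQ c1 by (rule power_two_thirds_identity)
  finally show ?thesis unfolding Q_def s_def c_def .
qed

lemma avoid_weight_le:
  assumes "p \<le> 1"
  shows "avoid_weight (2 * j + p) \<le> (2/3) * (35/18) ^ j"
proof (cases "2 * j + p = 0")
  case True
  then have "sum_avoiding (2 * j + p) = {}" unfolding sum_avoiding_def by auto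
  then show ?thesis by (simp add: avoid_weight_def)
next
  case False
  define d where "d = 2 * j + p"
  have hs: "(j + p) + j = d" "j + p \<le> j + 1" "1 \<le> j + p" using assms False unfolding d_def by auto
  have "avoid_weight d \<le> (\<Sum>L1 | L1 \<subseteq> {..<j + p} \<and> 0 \<in> L1.
      \<Sum>L2\<in>Pow ({j + p..<d} - (\<lambda>a. d - a) ` L1).
        (1/2::real) ^ card (sumset L1) * (1/2) ^ card (L2 - sumset L1))"
    by (rule avoid_weight_le_split[OF hs])
  also have "\<dots> \<le> (\<Sum>L1 | L1 \<subseteq> {..<j + p} \<and> 0 \<in> L1. (3/2) ^ (j + 2) * (8/27) ^ card L1)"
    using sum_upper_parts_le[OF hs(1,2)] by (intro sum_mono) (simp add: numeral_2_eq_2)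
  also have "\<dots> = (3/2) ^ (j + 2) * (\<Sum>L1 | L1 \<subseteq> {..<j + p} \<and> 0 \<in> L1. (8/27) ^ card L1)"
    by (simp add: sum_distrib_left)
  also have "\<dots> = (3/2) ^ (j + 2) * ((8/27) * (35/27) ^ (j + p - 1))"
    using sum_subsets_containing_zero[OF hs(3), of "8/27"] by simp
  also have "\<dots> \<le> (3/2) ^ (j + 2) * ((8/27) * (35/27) ^ j)"
    using assms by (intro mult_left_mono power_increasing) auto
  also have "\<dots> = (2/3) * (35/18) ^ j"
  proof -
    have "(35/18::real) ^ j = (3/2) ^ j * (35/27) ^ j" by (simp flip: power_mult_distrib)
    then show ?thesis by (simp add: power_add)
  qed
  finally show ?thesis unfolding d_def .
qed

section \<open>Asymptotics\<close>

lemma tendsto_zero_linear_recurrence: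
  fixes e u :: "nat \<Rightarrow> real" and r :: real
  assumes u: "u \<longlonglongrightarrow> 0" and r: "0 \<le> r" "r < 1" and rec: "\<And>n. e (Suc n) = u n + r * e n"
  shows "e \<longlonglongrightarrow> 0"
proof (rule LIMSEQ_I)
  fix \<epsilon> :: real assume "0 < \<epsilon>"
  then obtain N where N: "\<And>n. N \<le> n \<Longrightarrow> \<bar>u n\<bar> < (1 - r) * \<epsilon> / 2"
    using LIMSEQ_D[OF u, of "(1 - r) * \<epsilon> / 2"] r by auto
  have bound: "\<bar>e (N + k)\<bar> \<le> \<epsilon> / 2 + r ^ k * \<bar>e N\<bar>" for k
  proof (induction k)
    case (Suc k)
    have "\<bar>e (N + Suc k)\<bar> \<le> \<bar>u (N + k)\<bar> + r * \<bar>e (N + k)\<bar>"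
      using rec[of "N + k"] r by (simp add: abs_mult order.trans[OF abs_triangle_ineq])
    also have "\<dots> \<le> (1 - r) * \<epsilon> / 2 + r * (\<epsilon> / 2 + r ^ k * \<bar>e N\<bar>)"
      using N[of "N + k"] Suc.IH r by (intro add_mono mult_left_mono) auto
    also have "\<dots> = \<epsilon> / 2 + r ^ Suc k * \<bar>e N\<bar>" by (simp add: field_simps)
    finally show ?case .
  qed (use \<open>0 < \<epsilon>\<close> in simp)
  have "(\<lambda>k. r ^ k * \<bar>e N\<bar>) \<longlonglongrightarrow> 0"
    using r by (intro tendsto_mult_left_zero LIMSEQ_power_zero) auto
  then obtain K where K: "\<And>k. K \<le> k \<Longrightarrow> r ^ k * \<bar>e N\<bar> < \<epsilon> / 2"
    using LIMSEQ_D[of _ 0 "\<epsilon> / 2"] \<open>0 < \<epsilon>\<close> r by fastforce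
  show "\<exists>n0. \<forall>n\<ge>n0. norm (e n - 0) < \<epsilon>"
  proof (intro exI allI impI)
    fix n assume n: "N + K \<le> n"
    then have "r ^ (n - N) * \<bar>e N\<bar> < \<epsilon> / 2" using K by simp
    moreover have "\<bar>e n\<bar> \<le> \<epsilon> / 2 + r ^ (n - N) * \<bar>e N\<bar>" using bound[of "n - N"] n by simp
    ultimately show "norm (e n - 0) < \<epsilon>" by simp
  qed
qed

text \<open>The normalised sums \<open>s n\<close> satisfy \<open>s (n + 1) = (x n + s n) / q\<close>.\<close>
lemma tendsto_weighted_partial_sums:
  fixes x :: "nat \<Rightarrow> real"
  assumes x: "x \<longlonglongrightarrow> c" and q: "1 < q"
  shows "(\<lambda>n. (\<Sum>l<n. q ^ l * x l) / q ^ n) \<longlonglongrightarrow> c / (q - 1)"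
proof -
  define e where "e n = (\<Sum>l<n. q ^ l * x l) / q ^ n - c / (q - 1)" for n
  have "(\<lambda>n. (x n - c) / q) \<longlonglongrightarrow> (c - c) / q"
    by (intro tendsto_divide tendsto_diff x tendsto_const) (use q in simp)
  then have u: "(\<lambda>n. (x n - c) / q) \<longlonglongrightarrow> 0" by simp
  have rec: "e (Suc n) = (x n - c) / q + (1 / q) * e n" for n
  proof -
    have "q ^ n \<noteq> 0" "q - 1 \<noteq> 0" "q \<noteq> 0" using q by auto
    then have "(S + q ^ n * x n) / (q * q ^ n) - c / (q - 1) = (x n - c) / q + (1 / q) * (S / q ^ n - c / (q - 1))"
      for S by (simp add: field_simps)
    then show ?thesis unfolding e_def by simp
  qed
  have "e \<longlonglongrightarrow> 0" by (rule tendsto_zero_linear_recurrence[OF u _ _ rec]) (use q in auto)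
  then have "(\<lambda>n. e n + c / (q - 1)) \<longlonglongrightarrow> 0 + c / (q - 1)" by (intro tendsto_add tendsto_const)
  then show ?thesis unfolding e_def by simp
qed

lemma asymp_equiv_on_residue_class:
  fixes u :: "nat \<Rightarrow> real" and c L :: real and q i :: nat
  assumes q: "0 < q" and c: "0 < c" and L: "L \<noteq> 0"
    and lim: "(\<lambda>t. u (q * t + i) / c ^ t) \<longlonglongrightarrow> L"
  shows "u \<sim>[inf at_top (principal {f. f mod q = i})]
           (\<lambda>f. L / c powr (real i / real q) * c powr (real f / real q))"
proof -
  define F where "F = inf at_top (principal {f. f mod q = i})"
  have "c powr (real (q * t + i) / real q) = c ^ t * c powr (real i / real q)" for t
    using q c by (simp add: add_divide_distrib powr_add powr_realpow)
  then have "(\<lambda>t. u (q * t + i) / c powr (real (q * t + i) / real q)) \<longlonglongrightarrow> L / c powr (real i / real q)"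
    using tendsto_divide[OF lim tendsto_const[of "c powr (real i / real q)"]] c by simp
  then have "((\<lambda>f. u (q * (f div q) + i) / c powr (real (q * (f div q) + i) / real q))
      \<longlongrightarrow> L / c powr (real i / real q)) F"
    unfolding F_def
    by (intro tendsto_mono[OF inf_le1] filterlim_compose[OF _ filterlim_at_top_div_const_nat[OF q]])
  moreover have "eventually (\<lambda>f. q * (f div q) + i = f) F"
    unfolding F_def eventually_inf_principal
    by (intro always_eventually allI impI) (metis mem_Collect_eq mult_div_mod_eq)
  then have "eventually (\<lambda>f. u (q * (f div q) + i) / c powr (real (q * (f div q) + i) / real q) =
      u f / c powr (real f / real q)) F"
    by eventually_elim simp
  ultimately have "((\<lambda>f. u f / c powr (real f / real q)) \<longlongrightarrow> L / c powr (real i / real q)) F"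
    by (rule Lim_transform_eventually)
  then show ?thesis
    unfolding F_def using L c by (intro asymp_equivI'_const) auto
qed

lemma power_two_div: "i \<le> n \<Longrightarrow> (2::real) ^ (n - i) / 2 ^ n = 1 / 2 ^ i"
  by (simp add: power_diff)

definition ns_term :: "nat \<Rightarrow> nat \<Rightarrow> real" where
  "ns_term p j = avoid_weight (2 * j + p) / 2 ^ (j + 1)"

definition ns_const :: "nat \<Rightarrow> real" where
  "ns_const p = 2 ^ p / 2 + suminf (ns_term p)"

lemma ns_term_nonneg: "0 \<le> ns_term p j"
  unfolding ns_term_def using avoid_weight_nonneg by simp

lemma ns_term_le: "p \<le> 1 \<Longrightarrow> ns_term p j \<le> (1/3) * (35/36) ^ j"
proof -
  assume "p \<le> 1"
  then have "ns_term p j \<le> (2/3) * (35/18) ^ j / 2 ^ (j + 1)"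
    unfolding ns_term_def by (intro divide_right_mono avoid_weight_le) auto
  also have "\<dots> = (1/3) * (35/36) ^ j" by (simp add: power_divide[symmetric])
  finally show ?thesis .
qed

lemma summable_ns_term:
  assumes "p \<le> 1"
  shows "summable (ns_term p)"
proof (rule summable_comparison_test)
  show "\<exists>N. \<forall>n\<ge>N. norm (ns_term p n) \<le> (1/3) * (35/36) ^ n"
    using ns_term_le[OF assms] ns_term_nonneg by auto
  show "summable (\<lambda>n. (1/3::real) * (35/36) ^ n)"
    by (intro summable_mult summable_geometric) simp
qed

lemma ns_const_pos: "p \<le> 1 \<Longrightarrow> 0 < ns_const p"
  unfolding ns_const_def
  by (simp add: add_pos_nonneg suminf_nonneg summable_ns_term ns_term_nonneg)

lemma ns_count_split_terms:
  assumes p: "p \<le> 1" and n: "1 \<le> n"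
  shows "real (ns_count (2 * n + p)) / 2 ^ n =
    2 ^ p / 2 + (\<Sum>j<n. real (card (ns_below_min (2 * n + p) (n - j))) / 2 ^ n)"
proof -
  have half: "(2 * n + p) div 2 = n" using p by auto
  have "(\<Sum>m\<in>{1..n}. real (card (ns_below_min (2 * n + p) m))) =
      (\<Sum>j<n. real (card (ns_below_min (2 * n + p) (n - j))))"
    by (rule sum.reindex_bij_witness[where i = "\<lambda>j. n - j" and j = "\<lambda>m. n - m"]) auto
  moreover have "(2::real) ^ (2 * n + p - n - 1) / 2 ^ n = 2 ^ p / 2"
    using n power_two_div[of 1 "n + p"] by (simp add: power_add field_simps)
  ultimately show ?thesis
    unfolding ns_count_split_min[of "2 * n + p"] half
    by (simp add: add_divide_distrib sum_divide_distrib)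
qed

lemma ns_below_min_term_le:
  assumes "p \<le> 1" "j < n"
  shows "real (card (ns_below_min (2 * n + p) (n - j))) / 2 ^ n \<le> ns_term p j"
proof -
  have F: "2 * (n - j) + (2 * j + p) = 2 * n + p" using assms by simp
  have "real (card (ns_below_min (2 * n + p) (n - j))) / 2 ^ n \<le> 2 ^ (n - j - 1) * avoid_weight (2 * j + p) / 2 ^ n"
    using card_ns_below_min_le[of "n - j" "2 * j + p"] assms unfolding F
    by (intro divide_right_mono) auto
  also have "\<dots> = ns_term p j"
    using power_two_div[of "j + 1" n] assms unfolding ns_term_def by (simp add: field_simps)
  finally show ?thesis .
qed

lemma ns_below_min_term_eq:
  assumes "p \<le> 1" "3 * j + p < n"
  shows "real (card (ns_below_min (2 * n + p) (n - j))) / 2 ^ n = ns_term p j"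
proof -
  have F: "2 * (n - j) + (2 * j + p) = 2 * n + p" using assms by simp
  have "real (card (ns_below_min (2 * n + p) (n - j))) / 2 ^ n = 2 ^ (n - j - 1) * avoid_weight (2 * j + p) / 2 ^ n"
    using card_ns_below_min_eq[of "n - j" "2 * j + p"] assms unfolding F by simp
  also have "\<dots> = ns_term p j"
    using power_two_div[of "j + 1" n] assms unfolding ns_term_def by (simp add: field_simps)
  finally show ?thesis .
qed

text \<open>Sandwich: for \<open>j < n div 4\<close> the \<open>j\<close>-th term is exactly \<open>ns_term p j\<close>, and it never
  exceeds it.\<close>
lemma ns_count_limit:
  assumes p: "p \<le> 1"
  shows "(\<lambda>n. real (ns_count (2 * n + p)) / 2 ^ n) \<longlonglongrightarrow> ns_const p"
proof (rule tendsto_sandwich)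
  show "eventually (\<lambda>n. real (ns_count (2 * n + p)) / 2 ^ n \<le> 2 ^ p / 2 + (\<Sum>j<n. ns_term p j)) sequentially"
    using eventually_ge_at_top[of 1]
    by eventually_elim (auto simp: ns_count_split_terms[OF p] intro!: sum_mono ns_below_min_term_le[OF p])
  show "eventually (\<lambda>n. 2 ^ p / 2 + (\<Sum>j<n div 4. ns_term p j) \<le> real (ns_count (2 * n + p)) / 2 ^ n) sequentially"
    using eventually_ge_at_top[of 1]
  proof eventually_elim
    case (elim n)
    have "(\<Sum>j<n div 4. ns_term p j) = (\<Sum>j<n div 4. real (card (ns_below_min (2 * n + p) (n - j))) / 2 ^ n)"
      using p by (intro sum.cong refl ns_below_min_term_eq[symmetric]) auto
    also have "\<dots> \<le> (\<Sum>j<n. real (card (ns_below_min (2 * n + p) (n - j))) / 2 ^ n)"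
      by (intro sum_mono2) auto
    finally show ?case using ns_count_split_terms[OF p elim] by simp
  qed
  have S: "(\<lambda>n. \<Sum>j<n. ns_term p j) \<longlonglongrightarrow> suminf (ns_term p)"
    using summable_ns_term[OF p] by (rule summable_LIMSEQ)
  then show "(\<lambda>n. 2 ^ p / 2 + (\<Sum>j<n. ns_term p j)) \<longlonglongrightarrow> ns_const p"
    unfolding ns_const_def by (intro tendsto_add tendsto_const)
  show "(\<lambda>n. 2 ^ p / 2 + (\<Sum>j<n div 4. ns_term p j)) \<longlonglongrightarrow> ns_const p"
    unfolding ns_const_def
    by (intro tendsto_add tendsto_const filterlim_compose[OF S filterlim_at_top_div_const_nat]) simp
qed

lemma sum_ns_count_even:
  "(\<Sum>k\<in>{1..2 * n}. ns_count k) = (\<Sum>l<n. ns_count (2 * l + 1) + ns_count (2 * l + 2))"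
proof (induction n)
  case (Suc n)
  have "{1..2 * Suc n} = insert (2 * n + 2) (insert (2 * n + 1) {1..2 * n})" by auto
  then show ?case using Suc by simp
qed simp

lemma ns_count_partial_sums_limit:
  "(\<lambda>n. real (\<Sum>k\<in>{1..2 * n}. ns_count k) / 2 ^ n) \<longlonglongrightarrow> 2 * ns_const 0 + ns_const 1"
    (is ?even)
  "(\<lambda>n. real (\<Sum>k\<in>{1..2 * n + 1}. ns_count k) / 2 ^ n) \<longlonglongrightarrow> 2 * ns_const 0 + 2 * ns_const 1"
    (is ?odd)
proof -
  define y where "y l = real (ns_count (2 * l + 1)) / 2 ^ l + 2 * (real (ns_count (2 * Suc l)) / 2 ^ Suc l)" for l
  have "y \<longlonglongrightarrow> ns_const 1 + 2 * ns_const 0"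
    unfolding y_def using ns_count_limit[of 1] LIMSEQ_Suc[OF ns_count_limit[of 0]]
    by (intro tendsto_add tendsto_mult_left) auto
  then have "(\<lambda>n. (\<Sum>l<n. 2 ^ l * y l) / 2 ^ n) \<longlonglongrightarrow> (ns_const 1 + 2 * ns_const 0) / (2 - 1)"
    by (rule tendsto_weighted_partial_sums) simp
  moreover have "(\<Sum>l<n. 2 ^ l * y l) = real (\<Sum>k\<in>{1..2 * n}. ns_count k)" for n
    unfolding sum_ns_count_even y_def of_nat_sum by (intro sum.cong refl) (simp add: field_simps)
  ultimately show even: ?even by (simp add: add.commute)
  have "real (\<Sum>k\<in>{1..2 * n + 1}. ns_count k) / 2 ^ n =
      real (\<Sum>k\<in>{1..2 * n}. ns_count k) / 2 ^ n + real (ns_count (2 * n + 1)) / 2 ^ n" for n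
    by (simp add: add_divide_distrib)
  then show ?odd using tendsto_add[OF even ns_count_limit[of 1]] by (simp add: add_ac)
qed

lemma MED2_residue_limit:
  assumes "i < 4"
  shows "\<exists>L>0. (\<lambda>t. real (MED2 (4 * t + i)) / 2 ^ t) \<longlonglongrightarrow> L"
proof -
  define A where "A = 2 * ns_const 0 + ns_const 1"
  define B where "B = 2 * ns_const 0 + 2 * ns_const 1"
  have pos: "0 < A" "0 < B" using ns_const_pos[of 0] ns_const_pos[of 1] unfolding A_def B_def by auto
  note even = ns_count_partial_sums_limit(1)[folded A_def]
  note odd = ns_count_partial_sums_limit(2)[folded B_def]
  consider "i = 0" | "i = 1 \<or> i = 2" | "i = 3" using assms by linarith
  then show ?thesis
  proof cases
    case 1
    have "(\<lambda>t. real (MED2 (4 * Suc t + i)) / 2 ^ Suc t) \<longlonglongrightarrow> B / 2"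
    proof -
      have "(4 * Suc t + i - 1) div 2 = 2 * t + 1" for t using 1 by simp
      then show ?thesis unfolding MED2_eq_sum_ns_count using tendsto_divide[OF odd tendsto_const, of 2] by (simp add: ac_simps)
    qed
    then show ?thesis using pos by (intro exI[of _ "B / 2"]) (simp add: LIMSEQ_imp_Suc)
  next
    case 2
    then have "(4 * t + i - 1) div 2 = 2 * t" for t by auto
    then show ?thesis unfolding MED2_eq_sum_ns_count using even pos by auto
  next
    case 3
    then have "(4 * t + i - 1) div 2 = 2 * t + 1" for t by simp
    then show ?thesis unfolding MED2_eq_sum_ns_count using odd pos by auto
  qed
qed

theorem proposition4p5:
  "\<exists>D :: nat \<Rightarrow> real. \<forall>i<4. D i > 0 \<and>
     (\<lambda>f. real (MED2 f)) \<sim>[inf at_top (principal {f. f mod 4 = i})]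
       (\<lambda>f. D i * 2 powr (real f / 4))"
proof -
  obtain L where L: "\<And>i. i < 4 \<Longrightarrow> 0 < L i \<and> (\<lambda>t. real (MED2 (4 * t + i)) / 2 ^ t) \<longlonglongrightarrow> L i"
    using MED2_residue_limit by metis
  show ?thesis
  proof (intro exI[of _ "\<lambda>i. L i / 2 powr (real i / 4)"] allI impI conjI)
    fix i :: nat assume "i < 4"
    then show "0 < L i / 2 powr (real i / 4)" using L by simp
    show "(\<lambda>f. real (MED2 f)) \<sim>[inf at_top (principal {f. f mod 4 = i})]
        (\<lambda>f. L i / 2 powr (real i / 4) * 2 powr (real f / 4))"
      using asymp_equiv_on_residue_class[of 4 2 "L i"] L[OF \<open>i < 4\<close>] by simp
  qed
qed

end
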